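(* Let $T_1,T_2$ be $2\times2$ matrices with entries in $\{0,1\}$, neither having a zero row, let $\alpha_i=T_1^{(i)}\otimes T_2^{(i)}$ ($i=1,2$), and suppose $|\alpha_1|=|\alpha_2|=\alpha$ with $\alpha\ge 2$ an integer. Suppose moreover that $k_{1,2}=k_{2,2}=:\beta$. Then $$h(T)=\left(\frac{1-\bar\lambda\,\frac{\ln\beta}{\ln\alpha}}{\lambda^2}\right)\ln\alpha .$$ Furthermore, if $k_{1,2}=k_{2,2}=\alpha$, then $h(T)=\frac{\ln\alpha}{\lambda}$.
   Context: $\lambda=\frac{1+\sqrt5}{2}$ and $\bar\lambda=\frac{1-\sqrt5}{2}$. $T_k^{(i)}$ is the $i$-th row of $T_k$, $(v_1,v_2)\otimes(w_1,w_2)=(v_1w_1,v_1w_2,v_2w_1,v_2w_2)$, and $|\alpha_i|$ is the number of ones in $\alpha_i$. Define $\gamma^{[s_j]}_{i,n}$ ($i,j\in\{1,2\}$, $n\ge0$) by $\gamma^{[s_j]}_{i,0}=1$ and for $n\ge1$ $$\gamma^{[s_1]}_{i,n}=\sum_{j,k=1}^2T_1(i,j)T_2(i,k)\,\gamma^{[s_1]}_{j,n-1}\gamma^{[s_2]}_{k,n-1},\qquad \gamma^{[s_2]}_{i,n}=\sum_{j=1}^2T_1(i,j)\,\gamma^{[s_1]}_{j,n-1}.$$ $k_{i,2}$ is the number of distinct terms in the expression for $\gamma^{[s_2]}_{i,n}$, i.e. the number of $j\in\{1,2\}$ with $T_1(i,j)=1$. Let $l_0=1$, $l_1=2$, $l_{k+1}=l_k+l_{k-1}$,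 $|E_n|=\sum_{k=0}^nl_k$ (number of elements of word length $\le n$ in $G=\langle s_1,s_2\mid s_2s_2=s_2\rangle$), and $h(T)=\limsup_{n\to\infty}\frac{\ln(\gamma^{[s_1]}_{1,n}+\gamma^{[s_1]}_{2,n})}{|E_n|}$ (the paper's entropy of the $G$-vertex shift defined by $T=(T_1,T_2)$). *)

theory Defs
  imports Complex_Main "HOL-Library.Extended_Real" "HOL-Library.Liminf_Limsup"
begin

text \<open>2x2 matrices are functions nat => nat => nat, indices ranging over {1,2}.\<close>

definition lam :: real where "lam = (1 + sqrt 5) / 2"
definition lam_bar :: real where "lam_bar = (1 - sqrt 5) / 2"

fun gam :: "(nat \<Rightarrow> nat \<Rightarrow> nat) \<Rightarrow> (nat \<Rightarrow> nat \<Rightarrow> nat) \<Rightarrow> nat \<Rightarrow> (nat \<Rightarrow> nat) \<times> (nat \<Rightarrow> nat)" where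
  "gam T1 T2 0 = (\<lambda>i. 1, \<lambda>i. 1)"
| "gam T1 T2 (Suc n) =
     (\<lambda>i. \<Sum>j\<in>{1,2}. \<Sum>k\<in>{1,2}. T1 i j * T2 i k * fst (gam T1 T2 n) j * snd (gam T1 T2 n) k,
      \<lambda>i. \<Sum>j\<in>{1,2}. T1 i j * fst (gam T1 T2 n) j)"

definition gamma1 :: "(nat \<Rightarrow> nat \<Rightarrow> nat) \<Rightarrow> (nat \<Rightarrow> nat \<Rightarrow> nat) \<Rightarrow> nat \<Rightarrow> nat \<Rightarrow> nat" where
  "gamma1 T1 T2 i n = fst (gam T1 T2 n) i"
definition gamma2 :: "(nat \<Rightarrow> nat \<Rightarrow> nat) \<Rightarrow> (nat \<Rightarrow> nat \<Rightarrow> nat) \<Rightarrow> nat \<Rightarrow> nat \<Rightarrow> nat" where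
  "gamma2 T1 T2 i n = snd (gam T1 T2 n) i"

fun ll :: "nat \<Rightarrow> nat" where
  "ll 0 = 1"
| "ll (Suc 0) = 2"
| "ll (Suc (Suc k)) = ll (Suc k) + ll k"

definition E_card :: "nat \<Rightarrow> nat" where
  "E_card n = (\<Sum>k\<le>n. ll k)"

definition entropy :: "(nat \<Rightarrow> nat \<Rightarrow> nat) \<Rightarrow> (nat \<Rightarrow> nat \<Rightarrow> nat) \<Rightarrow> ereal" where
  "entropy T1 T2 = limsup (\<lambda>n. ereal (ln (real (gamma1 T1 T2 1 n + gamma1 T1 T2 2 n) ) / real (E_card n)))"

definition alpha_ones :: "(nat \<Rightarrow> nat \<Rightarrow> nat) \<Rightarrow> (nat \<Rightarrow> nat \<Rightarrow> nat) \<Rightarrow> nat \<Rightarrow> nat" where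
  "alpha_ones T1 T2 i = card {(j,k). j \<in> {1,2} \<and> k \<in> {1,2} \<and> T1 i j * T2 i k = 1}"

definition k2 :: "(nat \<Rightarrow> nat \<Rightarrow> nat) \<Rightarrow> nat \<Rightarrow> nat" where
  "k2 T1 i = card {j \<in> {1,2}. T1 i j = 1}"

end

theory Submission
  imports Defs
begin

text \<open>If every row of \<open>T\<^sub>1 \<otimes> T\<^sub>2\<close> has \<open>a\<close> ones and every row of \<open>T\<^sub>1\<close> has \<open>b\<close>
  ones, then \<open>gamma1 T1 T2 i n = x\<^sub>n\<close> does not depend on \<open>i\<close>, and \<open>x\<^sub>n\<^sub>+\<^sub>2 = a x\<^sub>n\<^sub>+\<^sub>1 \<cdot> b x\<^sub>n\<close>.
  So \<open>ln x\<^sub>n + ln a + ln b\<close> satisfies the Fibonacci recurrence, as does \<open>|E\<^sub>n| + 2 = l\<^sub>n\<^sub>+\<^sub>2\<close>.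
  Both grow like \<open>c \<lambda>\<^sup>n\<close> by Binet's formula, so the quotient defining the entropy
  actually converges, to the ratio of the two leading coefficients, which is
  \<open>(ln a - lam_bar ln b) / \<lambda>\<^sup>2\<close>.\<close>

lemma card_ones_01:
  fixes f :: "nat \<Rightarrow> nat"
  assumes "f 1 \<in> {0,1}" "f 2 \<in> {0,1}"
  shows "card {j \<in> {1,2}. f j = 1} = f 1 + f 2"
proof -
  have "{j \<in> {1,2::nat}. f j = 1} = (if f 1 = 1 then {1} else {}) \<union> (if f 2 = 1 then {2} else {})"
    by auto
  then show ?thesis using assms by auto
qed

lemma card_ones_tensor_01:
  fixes f g :: "nat \<Rightarrow> nat"
  assumes "f 1 \<in> {0,1}" "f 2 \<in> {0,1}" "g 1 \<in> {0,1}" "g 2 \<in> {0,1}"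
  shows "card {(j,k). j \<in> {1,2} \<and> k \<in> {1,2} \<and> f j * g k = 1} = (f 1 + f 2) * (g 1 + g 2)"
proof -
  have "{(j,k). j \<in> {1,2::nat} \<and> k \<in> {1,2::nat} \<and> f j * g k = 1}
      = {j \<in> {1,2}. f j = 1} \<times> {k \<in> {1,2}. g k = 1}"
    by auto
  then show ?thesis
    using card_ones_01[OF assms(1,2)] card_ones_01[OF assms(3,4)] by (simp add: card_cartesian_product)
qed

lemma row_sums_of_counts:
  assumes "\<forall>j\<in>{1,2}. T1 i j \<in> {0,1} \<and> T2 i j \<in> {0,1}"
  shows "T1 i 1 + T1 i 2 = k2 T1 i"
    and "(T1 i 1 + T1 i 2) * (T2 i 1 + T2 i 2) = alpha_ones T1 T2 i"
  using assms card_ones_01[of "T1 i"] card_ones_tensor_01[of "T1 i" "T2 i"]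
  unfolding k2_def alpha_ones_def by auto

fun gam_uniform :: "nat \<Rightarrow> nat \<Rightarrow> nat \<Rightarrow> nat \<times> nat" where
  "gam_uniform a b 0 = (1, 1)"
| "gam_uniform a b (Suc n) =
     (a * fst (gam_uniform a b n) * snd (gam_uniform a b n), b * fst (gam_uniform a b n))"

lemma gam_eq_gam_uniform:
  assumes rows: "\<And>i. i \<in> {1,2} \<Longrightarrow> T1 i 1 + T1 i 2 = b \<and> (T1 i 1 + T1 i 2) * (T2 i 1 + T2 i 2) = a"
    and "i \<in> {1,2}"
  shows "fst (gam T1 T2 n) i = fst (gam_uniform a b n) \<and> snd (gam T1 T2 n) i = snd (gam_uniform a b n)"
  using \<open>i \<in> {1,2}\<close>
proof (induction n arbitrary: i)
  case 0
  then show ?case by simp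
next
  case (Suc n)
  define x where "x = fst (gam_uniform a b n)"
  define y where "y = snd (gam_uniform a b n)"
  have IH: "fst (gam T1 T2 n) j = x" "snd (gam T1 T2 n) j = y" if "j \<in> {1,2}" for j
    using Suc.IH[OF that] x_def y_def by auto
  have row_b: "T1 i 1 + T1 i 2 = b" and row_a: "(T1 i 1 + T1 i 2) * (T2 i 1 + T2 i 2) = a"
    using rows[OF Suc.prems] by auto
  have "fst (gam T1 T2 (Suc n)) i = (T1 i 1 + T1 i 2) * (T2 i 1 + T2 i 2) * x * y"
    by (simp add: IH algebra_simps)
  also have "\<dots> = fst (gam_uniform a b (Suc n))"
    by (simp only: row_a) (simp add: x_def y_def)
  moreover have "snd (gam T1 T2 (Suc n)) i = (T1 i 1 + T1 i 2) * x"
    by (simp add: IH algebra_simps)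
  moreover have "\<dots> = snd (gam_uniform a b (Suc n))"
    by (simp only: row_b) (simp add: x_def)
  ultimately show ?case by simp
qed

lemma gam_uniform_pos: "a \<ge> 1 \<Longrightarrow> b \<ge> 1 \<Longrightarrow> fst (gam_uniform a b n) \<ge> 1 \<and> snd (gam_uniform a b n) \<ge> 1"
  by (induction n) auto

lemma E_card_add_2: "E_card n + 2 = ll (n + 2)"
proof (induction n)
  case 0
  then show ?case by (simp add: E_card_def numeral_eq_Suc)
next
  case (Suc n)
  then show ?case by (simp add: E_card_def)
qed

lemma sqrt5_bounds: "2 < sqrt (5::real)" "sqrt (5::real) < 3"
  by (rule real_less_rsqrt, simp) (rule real_sqrt_less_mono[where y=9, simplified], simp)

lemma lam_squared: "lam\<^sup>2 = lam + 1"
  and lam_bar_squared: "lam_bar\<^sup>2 = lam_bar + 1"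
  and lam_minus_lam_bar: "lam - lam_bar = sqrt 5"
  and lam_bar_eq: "lam_bar = 1 - lam"
  unfolding lam_def lam_bar_def power2_eq_square by (simp_all add: field_simps)

lemma lam_squared_eq_2_minus_lam_bar: "lam\<^sup>2 = 2 - lam_bar"
  using lam_squared lam_bar_eq by simp

lemma lam_gt_1: "lam > 1"
  and abs_lam_bar_lt_1: "\<bar>lam_bar\<bar> < 1"
  unfolding lam_def lam_bar_def using sqrt5_bounds by auto

lemma fibonacci_closed_form:
  fixes u :: "nat \<Rightarrow> real"
  assumes rec: "\<And>n. u (Suc (Suc n)) = u (Suc n) + u n"
  shows "u n = (u 1 - lam_bar * u 0) / (lam - lam_bar) * lam ^ n
             + (lam * u 0 - u 1) / (lam - lam_bar) * lam_bar ^ n"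
proof -
  define A where "A = (u 1 - lam_bar * u 0) / (lam - lam_bar)"
  define B where "B = (lam * u 0 - u 1) / (lam - lam_bar)"
  have lam_ne: "lam - lam_bar \<noteq> 0" using lam_minus_lam_bar by simp
  have "u n = A * lam ^ n + B * lam_bar ^ n \<and> u (Suc n) = A * lam ^ Suc n + B * lam_bar ^ Suc n"
  proof (induction n)
    case 0
    have "A + B = u 0 * (lam - lam_bar) / (lam - lam_bar)"
      unfolding A_def B_def by (simp add: add_divide_distrib[symmetric] algebra_simps)
    moreover have "A * lam + B * lam_bar = u 1 * (lam - lam_bar) / (lam - lam_bar)"
      unfolding A_def B_def by (simp add: add_divide_distrib[symmetric] algebra_simps)
    ultimately have "A + B = u 0" "A * lam + B * lam_bar = u 1"
      using lam_ne by simp_all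
    then show ?case by simp
  next
    case (Suc n)
    have "u (Suc (Suc n)) = A * lam ^ n * (lam + 1) + B * lam_bar ^ n * (lam_bar + 1)"
      using Suc rec by (simp add: algebra_simps)
    also have "\<dots> = A * lam ^ Suc (Suc n) + B * lam_bar ^ Suc (Suc n)"
      unfolding lam_squared[symmetric] lam_bar_squared[symmetric] by (simp add: power2_eq_square)
    finally show ?case using Suc by simp
  qed
  then show ?thesis unfolding A_def B_def by simp
qed

lemma fibonacci_normalized_limit:
  fixes u :: "nat \<Rightarrow> real"
  assumes "\<And>n. u (Suc (Suc n)) = u (Suc n) + u n"
  shows "(\<lambda>n. u n / lam ^ n) \<longlonglongrightarrow> (u 1 - lam_bar * u 0) / (lam - lam_bar)"
proof -
  define A where "A = (u 1 - lam_bar * u 0) / (lam - lam_bar)"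
  define B where "B = (lam * u 0 - u 1) / (lam - lam_bar)"
  have "u n / lam ^ n = A + B * (lam_bar / lam) ^ n" for n
  proof -
    have "u n = A * lam ^ n + B * lam_bar ^ n"
      using fibonacci_closed_form[of u n, OF assms] unfolding A_def B_def .
    moreover have "lam ^ n \<noteq> 0" using lam_gt_1 by simp
    ultimately show ?thesis by (simp add: power_divide add_divide_distrib)
  qed
  moreover have "(\<lambda>n. A + B * (lam_bar / lam) ^ n) \<longlonglongrightarrow> A + B * 0"
    using lam_gt_1 abs_lam_bar_lt_1
    by (intro tendsto_intros LIMSEQ_power_zero) (simp add: abs_divide)
  ultimately show ?thesis unfolding A_def by simp
qed

lemma fibonacci_ratio_limit:
  fixes u v :: "nat \<Rightarrow> real"
  assumes "\<And>n. u (Suc (Suc n)) = u (Suc n) + u n"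
    and "\<And>n. v (Suc (Suc n)) = v (Suc n) + v n"
    and "v 1 - lam_bar * v 0 \<noteq> 0"
  shows "(\<lambda>n. (u n + c) / (v n + d)) \<longlonglongrightarrow> (u 1 - lam_bar * u 0) / (v 1 - lam_bar * v 0)"
proof -
  have lam_ne: "lam - lam_bar \<noteq> 0" using lam_minus_lam_bar by simp
  have vanish: "(\<lambda>n. e / lam ^ n) \<longlonglongrightarrow> 0" for e :: real
  proof -
    have "(\<lambda>n. e * (1 / lam) ^ n) \<longlonglongrightarrow> e * 0"
      using lam_gt_1 by (intro tendsto_intros LIMSEQ_power_zero) simp
    then show ?thesis by (simp add: power_divide)
  qed
  have "(\<lambda>n. (u n / lam ^ n + c / lam ^ n) / (v n / lam ^ n + d / lam ^ n))
        \<longlonglongrightarrow> ((u 1 - lam_bar * u 0) / (lam - lam_bar) + 0) / ((v 1 - lam_bar * v 0) / (lam - lam_bar) + 0)"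
    using assms lam_ne
    by (intro tendsto_intros fibonacci_normalized_limit vanish) auto
  moreover have "(u n / lam ^ n + c / lam ^ n) / (v n / lam ^ n + d / lam ^ n) = (u n + c) / (v n + d)" for n
    using lam_gt_1 by (simp add: add_divide_distrib[symmetric])
  ultimately show ?thesis using lam_ne by simp
qed

lemma ln_gam_uniform_over_E_card_limit:
  fixes a b :: nat
  assumes "a \<ge> 1" "b \<ge> 1"
  shows "(\<lambda>n. ln (real (2 * fst (gam_uniform a b n))) / real (E_card n))
           \<longlonglongrightarrow> (ln (real a) - lam_bar * ln (real b)) / lam\<^sup>2"
proof -
  define x where "x n = real (fst (gam_uniform a b n))" for n
  have x_pos: "x n > 0" for n using gam_uniform_pos[of a b n] assms unfolding x_def by simp
  have x_rec: "x (Suc (Suc n)) = real a * x (Suc n) * (real b * x n)" for n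
    unfolding x_def by simp
  define u where "u n = ln (x n) + ln (real a) + ln (real b)" for n
  have u_rec: "u (Suc (Suc n)) = u (Suc n) + u n" for n
    unfolding u_def x_rec using x_pos[of n] x_pos[of "Suc n"] assms by (simp add: ln_mult)
  define v where "v n = real (ll (n + 2))" for n
  have v_rec: "v (Suc (Suc n)) = v (Suc n) + v n" for n
    unfolding v_def by simp
  have v_lead: "v 1 - lam_bar * v 0 = (2 - lam_bar)\<^sup>2"
    unfolding v_def using lam_bar_squared by (simp add: numeral_eq_Suc power2_eq_square algebra_simps)
  have u_lead: "u 1 - lam_bar * u 0 = (2 - lam_bar) * (ln (real a) - lam_bar * ln (real b))"
  proof -
    have "(2 - lam_bar) * (ln (real a) - lam_bar * ln (real b))
        = u 1 - lam_bar * u 0 + (lam_bar\<^sup>2 - lam_bar - 1) * ln (real b)"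
      unfolding u_def x_def by (simp add: power2_eq_square algebra_simps)
    then show ?thesis using lam_bar_squared by simp
  qed
  have "(\<lambda>n. (u n + (ln 2 - ln (real a) - ln (real b))) / (v n + - 2))
          \<longlonglongrightarrow> (u 1 - lam_bar * u 0) / (v 1 - lam_bar * v 0)"
    using abs_lam_bar_lt_1 by (intro fibonacci_ratio_limit u_rec v_rec) (simp only: v_lead, simp)
  moreover have "(u n + (ln 2 - ln (real a) - ln (real b))) / (v n + - 2)
      = ln (real (2 * fst (gam_uniform a b n))) / real (E_card n)" for n
  proof -
    have "real (E_card n) = v n - 2"
      using arg_cong[OF E_card_add_2[of n], of real] unfolding v_def by simp
    then show ?thesis
      using x_pos[of n] unfolding u_def x_def by (simp add: ln_mult)
  qed
  moreover have "(u 1 - lam_bar * u 0) / (v 1 - lam_bar * v 0) = (ln (real a) - lam_bar * ln (real b)) / lam\<^sup>2"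
    using abs_lam_bar_lt_1 unfolding u_lead v_lead lam_squared_eq_2_minus_lam_bar by (simp add: power2_eq_square)
  ultimately show ?thesis by simp
qed

theorem theorem3:
  fixes T1 T2 :: "nat \<Rightarrow> nat \<Rightarrow> nat" and a b :: nat
  assumes "\<forall>i\<in>{1,2}. \<forall>j\<in>{1,2}. T1 i j \<in> {0,1} \<and> T2 i j \<in> {0,1}"
    and "\<forall>i\<in>{1,2}. \<exists>j\<in>{1,2}. T1 i j \<noteq> 0"
    and "\<forall>i\<in>{1,2}. \<exists>j\<in>{1,2}. T2 i j \<noteq> 0"
    and "alpha_ones T1 T2 1 = a" and "alpha_ones T1 T2 2 = a" and "a \<ge> 2"
    and "k2 T1 1 = b" and "k2 T1 2 = b"
  shows "entropy T1 T2 = ereal ((1 - lam_bar * (ln (real b) / ln (real a))) / lam\<^sup>2 * ln (real a))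
         \<and> (b = a \<longrightarrow> entropy T1 T2 = ereal (ln (real a) / lam))"
proof -
  have rows: "T1 i 1 + T1 i 2 = b \<and> (T1 i 1 + T1 i 2) * (T2 i 1 + T2 i 2) = a" if "i \<in> {1,2}" for i
  proof -
    have "\<forall>j\<in>{1,2}. T1 i j \<in> {0,1} \<and> T2 i j \<in> {0,1}" using bspec[OF assms(1) that] .
    moreover have "k2 T1 i = b" "alpha_ones T1 T2 i = a" using that assms(4,5,7,8) by auto
    ultimately show ?thesis using row_sums_of_counts by metis
  qed
  have "b \<ge> 1"
    using assms(2) rows[of 1] by fastforce
  have "gamma1 T1 T2 i n = fst (gam_uniform a b n)" if "i \<in> {1,2}" for i n
    using gam_eq_gam_uniform[of T1 b T2 a, OF rows that] unfolding gamma1_def by simp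
  then have "gamma1 T1 T2 1 n + gamma1 T1 T2 2 n = 2 * fst (gam_uniform a b n)" for n
    by simp
  then have "(\<lambda>n. ln (real (gamma1 T1 T2 1 n + gamma1 T1 T2 2 n)) / real (E_card n))
      \<longlonglongrightarrow> (ln (real a) - lam_bar * ln (real b)) / lam\<^sup>2"
    using \<open>a \<ge> 2\<close> \<open>b \<ge> 1\<close> by (simp only:) (rule ln_gam_uniform_over_E_card_limit; simp)
  then have "entropy T1 T2 = ereal ((ln (real a) - lam_bar * ln (real b)) / lam\<^sup>2)"
    unfolding entropy_def by (intro lim_imp_Limsup tendsto_ereal) simp_all
  moreover have "(1 - lam_bar * (ln (real b) / ln (real a))) / lam\<^sup>2 * ln (real a)
      = (ln (real a) - lam_bar * ln (real b)) / lam\<^sup>2"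
  proof -
    have "ln (real a) \<noteq> 0" "lam\<^sup>2 \<noteq> 0" using \<open>a \<ge> 2\<close> lam_gt_1 by simp_all
    then show ?thesis by (simp add: field_simps)
  qed
  moreover have "(ln (real a) - lam_bar * ln (real a)) / lam\<^sup>2 = ln (real a) / lam"
    using lam_gt_1 by (simp add: lam_bar_eq power2_eq_square field_simps)
  ultimately show ?thesis by auto
qed

end
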